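(* Let $\hat q$ be an $m\times m$ and $\hat p$ an $s\times s$ parametric matrix, let $M$ be an $n\times m$ matrix over $\mathfrak R$ and $N$ an $m\times s$ $(\hat q,\hat p)$-Manin matrix over $\mathfrak R$ such that every $N_{ij}$ commutes with every $M_{kl}$. Let $I=(i_1,\dots,i_r)$ be a multi-index with entries in $\{1,\dots,n\}$ and $K=(k_1\le\dots\le k_r)$ a nondecreasing multi-index with entries in $\{1,\dots,s\}$. Then $$\widehat{\mathrm{rper}}_{\hat p}((MN)_{IK})=\sum_J\widehat{\mathrm{rper}}_{\hat q}(M_{IJ})\,\widehat{\mathrm{rper}}_{\hat p}(N_{JK}),$$ the sum over all nondecreasing multi-indices $J=(j_1\le\dots\le j_r)$ with entries in $\{1,\dots,m\}$. In particular, if $m=n=s$, then $\widehat{\mathrm{rper}}_{\hat p}(MN)=\sum_J\widehat{\mathrm{rper}}_{\hat q}(M_{[n]J})\,\widehat{\mathrm{rper}}_{\hat p}(N_{J[n]})$, where $[n]=(1,2,\dots,n)$.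
   Context: $\mathfrak R$ is an associative unital algebra over $\mathbb C$. A parametric $n\times n$ matrix is a matrix $\hat q=(q_{ij})$ of nonzero complex numbers with $q_{ij}q_{ji}=1$, $q_{ii}=1$. For parametric $\hat q$ ($m\times m$) and $\hat p$ ($s\times s$), an $m\times s$ matrix $N$ over $\mathfrak R$ is a $(\hat q,\hat p)$-Manin matrix if $N_{ik}N_{jk}=q_{ji}N_{jk}N_{ik}$ for $i<j$ and all $k$, and $N_{ik}N_{jl}-q_{ji}p_{kl}N_{jl}N_{ik}+p_{kl}N_{il}N_{jk}-q_{ji}N_{jk}N_{il}=0$ for $i<j$, $k<l$. For a nondecreasing multi-index $J=(j_1\le\dots\le j_r)$ and $\sigma\in S_r$, $\mu(\hat p,J,\sigma)=\prod_{s<t,\ \sigma(s)>\sigma(t)}p_{j_{\sigma(t)}j_{\sigma(s)}}$. For a matrix $X$, any multi-index $I=(i_1,\dots,i_r)$ and nondecreasing $J$, $\mathrm{rper}_{\hat p}(X_{IJ})=\sum_{\sigma\in S_r}\mu(\hat p,J,\sigma)X_{i_1,j_{\sigma(1)}}\cdots X_{i_r,j_{\sigma(r)}}$, and $\widehat{\mathrm{rper}}_{\hat p}(X_{IJ})=\frac1{v(J)}\mathrm{rper}_{\hat p}(X_{IJ})$ where $v(J)=\prod_{a}|\{t:j_t=a\}|!$. $\widehat{\mathrm{rper}}_{\hat p}(X)$ for square $X$ is the case $I=J=(1,\dots,n)$. *)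

theory Defs
  imports Complex_Main "HOL-Library.FuncSet" "HOL-Combinatorics.Permutations"
begin

class complex_algebra_1 = ring_1 +
  fixes scaleC :: "complex \<Rightarrow> 'a \<Rightarrow> 'a" (infixr "*\<^sub>C" 75)
  assumes scaleC_add_right: "a *\<^sub>C (x + y) = a *\<^sub>C x + a *\<^sub>C y"
    and scaleC_add_left: "(a + b) *\<^sub>C x = a *\<^sub>C x + b *\<^sub>C x"
    and scaleC_scaleC: "a *\<^sub>C (b *\<^sub>C x) = (a * b) *\<^sub>C x"
    and scaleC_one: "1 *\<^sub>C x = x"
    and mult_scaleC_left: "(a *\<^sub>C x) * y = a *\<^sub>C (x * y)"
    and mult_scaleC_right: "x * (a *\<^sub>C y) = a *\<^sub>C (x * y)"

text \<open>Matrices are functions of 1-based indices; multi-indices of length r are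
  functions on {1..r}.\<close>

definition parametric_mat :: "nat \<Rightarrow> (nat \<Rightarrow> nat \<Rightarrow> complex) \<Rightarrow> bool" where
  "parametric_mat n q \<longleftrightarrow> (\<forall>i\<in>{1..n}. \<forall>j\<in>{1..n}. q i j \<noteq> 0 \<and> q i j * q j i = 1)
     \<and> (\<forall>i\<in>{1..n}. q i i = 1)"

definition manin :: "nat \<Rightarrow> nat \<Rightarrow> (nat \<Rightarrow> nat \<Rightarrow> complex) \<Rightarrow> (nat \<Rightarrow> nat \<Rightarrow> complex)
    \<Rightarrow> (nat \<Rightarrow> nat \<Rightarrow> 'a::complex_algebra_1) \<Rightarrow> bool" where
  "manin m s q p N \<longleftrightarrow>
     (\<forall>i\<in>{1..m}. \<forall>j\<in>{1..m}. \<forall>k\<in>{1..s}. i < j \<longrightarrow>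
        N i k * N j k = q j i *\<^sub>C (N j k * N i k)) \<and>
     (\<forall>i\<in>{1..m}. \<forall>j\<in>{1..m}. \<forall>k\<in>{1..s}. \<forall>l\<in>{1..s}. i < j \<longrightarrow> k < l \<longrightarrow>
        N i k * N j l - (q j i * p k l) *\<^sub>C (N j l * N i k)
          + p k l *\<^sub>C (N i l * N j k) - q j i *\<^sub>C (N j k * N i l) = 0)"

definition nondecr :: "nat \<Rightarrow> (nat \<Rightarrow> nat) \<Rightarrow> bool" where
  "nondecr r J \<longleftrightarrow> (\<forall>a\<in>{1..r}. \<forall>b\<in>{1..r}. a \<le> b \<longrightarrow> J a \<le> J b)"

definition mu :: "(nat \<Rightarrow> nat \<Rightarrow> complex) \<Rightarrow> nat \<Rightarrow> (nat \<Rightarrow> nat) \<Rightarrow> (nat \<Rightarrow> nat) \<Rightarrow> complex" where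
  "mu p r J \<sigma> = (\<Prod>(a, b)\<in>{(a, b). a \<in> {1..r} \<and> b \<in> {1..r} \<and> a < b \<and> \<sigma> a > \<sigma> b}.
      p (J (\<sigma> b)) (J (\<sigma> a)))"

definition rper :: "(nat \<Rightarrow> nat \<Rightarrow> complex) \<Rightarrow> nat \<Rightarrow> (nat \<Rightarrow> nat \<Rightarrow> 'a::complex_algebra_1)
    \<Rightarrow> (nat \<Rightarrow> nat) \<Rightarrow> (nat \<Rightarrow> nat) \<Rightarrow> 'a" where
  "rper p r X I J = (\<Sum>\<sigma> | \<sigma> permutes {1..r}.
      mu p r J \<sigma> *\<^sub>C prod_list (map (\<lambda>t. X (I t) (J (\<sigma> t))) [1..<r+1]))"

definition vmult :: "nat \<Rightarrow> (nat \<Rightarrow> nat) \<Rightarrow> nat" where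
  "vmult r J = (\<Prod>a\<in>J ` {1..r}. fact (card {t\<in>{1..r}. J t = a}))"

definition rper_hat :: "(nat \<Rightarrow> nat \<Rightarrow> complex) \<Rightarrow> nat \<Rightarrow> (nat \<Rightarrow> nat \<Rightarrow> 'a::complex_algebra_1)
    \<Rightarrow> (nat \<Rightarrow> nat) \<Rightarrow> (nat \<Rightarrow> nat) \<Rightarrow> 'a" where
  "rper_hat p r X I J = (1 / of_nat (vmult r J)) *\<^sub>C rper p r X I J"

definition matmul :: "nat \<Rightarrow> (nat \<Rightarrow> nat \<Rightarrow> 'a::ring_1) \<Rightarrow> (nat \<Rightarrow> nat \<Rightarrow> 'a) \<Rightarrow> nat \<Rightarrow> nat \<Rightarrow> 'a" where
  "matmul m M N i k = (\<Sum>j=1..m. M i j * N j k)"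

definition nondecr_indices :: "nat \<Rightarrow> nat \<Rightarrow> (nat \<Rightarrow> nat) set" where
  "nondecr_indices r m = {J. J \<in> {1..r} \<rightarrow>\<^sub>E {1..m} \<and> nondecr r J}"

end

theory Submission
  imports Defs
begin

(*
  Expanding each entry of MN and moving the entries of M to the left (they commute with those
  of N) gives rper_p((MN)_{IK}) as the sum over all maps g : {1..r} -> {1..m} of
  M_{i_1 g_1} ... M_{i_r g_r} rper_p(N_{gK}). Every such g is J o tau for a unique nondecreasing J,
  and exactly v(J) permutations tau give the same g. For nondecreasing K the Manin relations say
  that the permanent of N with rows ..., j', j, ... (j < j') in adjacent positions is q_{jj'} times
  the one with these two rows exchanged, so induction on the inversions of tau gives
  rper_p(N_{(J o tau)K}) = mu(q, J, tau) rper_p(N_{JK}). Summing over tau then reassembles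
  rper_q(M_{IJ}).
*)

lemma scaleC_zero_right [simp]: "(c::complex) *\<^sub>C (0::'a::complex_algebra_1) = 0"
  by (metis add_cancel_right_right add_0 scaleC_add_right)

lemma scaleC_zero_left [simp]: "(0::complex) *\<^sub>C (x::'a::complex_algebra_1) = 0"
  by (metis add_cancel_right_right add_0 scaleC_add_left)

lemma scaleC_sum_right: "(c::complex) *\<^sub>C (\<Sum>i\<in>A. f i) = (\<Sum>i\<in>A. c *\<^sub>C (f i::'a::complex_algebra_1))"
  by (induction A rule: infinite_finite_induct) (auto simp: scaleC_add_right)

lemma of_nat_mult_eq_scaleC: "(of_nat n :: 'a::complex_algebra_1) * x = (of_nat n :: complex) *\<^sub>C x"
  by (induction n) (auto simp: scaleC_add_left scaleC_one distrib_right)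

lemma scaleC_mult_scaleC:
  "((a::complex) *\<^sub>C x) * (b *\<^sub>C (y::'a::complex_algebra_1)) = (a * b) *\<^sub>C (x * y)"
  by (simp add: mult_scaleC_left mult_scaleC_right scaleC_scaleC mult.commute)

lemma scaleC_add_self_cancel:
  fixes x y :: "'a::complex_algebra_1"
  assumes "x + x = c *\<^sub>C (y + y)"
  shows "x = c *\<^sub>C y"
proof -
  have double: "z + z = (2::complex) *\<^sub>C z" for z :: 'a
    by (metis one_add_one scaleC_add_left scaleC_one)
  have "(2::complex) *\<^sub>C x = (2::complex) *\<^sub>C (c *\<^sub>C y)"
    using assms unfolding double by (simp add: scaleC_scaleC mult.commute)
  then have "(1/2::complex) *\<^sub>C ((2::complex) *\<^sub>C x) = (1/2::complex) *\<^sub>C ((2::complex) *\<^sub>C (c *\<^sub>C y))"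
    by simp
  then show ?thesis by (simp add: scaleC_scaleC scaleC_one)
qed

section \<open>Inversions and adjacent transpositions\<close>

abbreviation adj_swap :: "nat \<Rightarrow> nat \<Rightarrow> nat" where
  "adj_swap t \<equiv> Transposition.transpose t (Suc t)"

lemma adj_swap_permutes: "1 \<le> t \<Longrightarrow> t < r \<Longrightarrow> adj_swap t permutes {1..r}"
  by (rule permutes_swap_id) auto

lemma comp_adj_swap_adj_swap [simp]: "w \<circ> adj_swap t \<circ> adj_swap t = w"
  by (simp add: comp_assoc)

abbreviation swap_pair :: "nat \<Rightarrow> nat \<times> nat \<Rightarrow> nat \<times> nat" where
  "swap_pair t \<equiv> map_prod (adj_swap t) (adj_swap t)"

definition inversions :: "nat \<Rightarrow> (nat \<Rightarrow> nat) \<Rightarrow> (nat \<times> nat) set" where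
  "inversions r w = {(a, b). a \<in> {1..r} \<and> b \<in> {1..r} \<and> a < b \<and> w a > w b}"

lemma swap_pair_swap_pair [simp]: "swap_pair t (swap_pair t x) = x"
  by (cases x) simp

lemma mem_image_swap_pair: "x \<in> swap_pair t ` A \<longleftrightarrow> swap_pair t x \<in> A"
proof
  assume "swap_pair t x \<in> A"
  then show "x \<in> swap_pair t ` A" by (rule image_eqI[rotated]) simp
qed auto

lemma inversions_adj_swap:
  assumes "1 \<le> t" "t < r" "w t < w (Suc t)"
  shows "inversions r (w \<circ> adj_swap t) = insert (t, Suc t) (swap_pair t ` inversions r w)"
proof (rule set_eqI)
  fix x :: "nat \<times> nat"
  obtain a b where x: "x = (a, b)" by (cases x)
  show "x \<in> inversions r (w \<circ> adj_swap t) \<longleftrightarrow> x \<in> insert (t, Suc t) (swap_pair t ` inversions r w)"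
    unfolding x insert_iff mem_image_swap_pair using assms
    by (auto simp: inversions_def transpose_def split: if_splits)
qed

lemma finite_inversions [simp]: "finite (inversions r w)"
  by (rule finite_subset[of _ "{1..r} \<times> {1..r}"]) (auto simp: inversions_def)

lemma mu_eq_prod_inversions: "mu p r J \<sigma> = (\<Prod>(a, b)\<in>inversions r \<sigma>. p (J (\<sigma> b)) (J (\<sigma> a)))"
  unfolding mu_def inversions_def by simp

lemma adjacent_pair_notin_swap_pair_inversions: "(t, Suc t) \<notin> swap_pair t ` inversions r w"
  unfolding mem_image_swap_pair by (simp add: inversions_def)

lemma card_inversions_adj_swap:
  assumes "1 \<le> t" "t < r" "w t < w (Suc t)"
  shows "card (inversions r (w \<circ> adj_swap t)) = Suc (card (inversions r w))"
proof -
  have "inj (swap_pair t)" by (metis injI swap_pair_swap_pair)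
  then show ?thesis
    unfolding inversions_adj_swap[OF assms]
    by (simp add: adjacent_pair_notin_swap_pair_inversions card_image inj_on_subset)
qed

lemma mu_adj_swap:
  assumes "1 \<le> t" "t < r" "\<sigma> t < \<sigma> (Suc t)"
  shows "mu p r K (\<sigma> \<circ> adj_swap t) = p (K (\<sigma> t)) (K (\<sigma> (Suc t))) * mu p r K \<sigma>"
proof -
  have "inj (swap_pair t)" by (metis injI swap_pair_swap_pair)
  then show ?thesis
    unfolding mu_eq_prod_inversions inversions_adj_swap[OF assms]
    by (simp add: adjacent_pair_notin_swap_pair_inversions prod.reindex inj_on_subset case_prod_unfold)
qed

lemma nondecr_iff_inversions_empty: "nondecr r w \<longleftrightarrow> inversions r w = {}"
proof
  assume nd: "nondecr r w"
  have "\<not> w b < w a" if "a \<in> {1..r}" "b \<in> {1..r}" "a < b" for a b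
    using nd that unfolding nondecr_def by (meson leD less_imp_le)
  then show "inversions r w = {}" by (auto simp: inversions_def)
next
  assume none: "inversions r w = {}"
  show "nondecr r w"
    unfolding nondecr_def
  proof (intro ballI impI)
    fix a b assume ab: "a \<in> {1..r}" "b \<in> {1..r}" "a \<le> b"
    show "w a \<le> w b"
    proof (cases "a = b")
      case False
      with ab have "a < b" by simp
      moreover have "(a, b) \<notin> inversions r w" using none by simp
      ultimately show ?thesis using ab by (simp add: inversions_def not_less)
    qed simp
  qed
qed

lemma adjacent_descent_if_inversions:
  assumes "inversions r w \<noteq> {}"
  obtains t where "1 \<le> t" "t < r" "w (Suc t) < w t"
proof (rule ccontr)
  note descent = that
  assume "\<not> thesis"
  with descent have step: "w t \<le> w (Suc t)" if "t \<in> {1..<r}" for t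
    using that by (meson atLeastLessThan_iff not_less)
  have "nondecr r w"
    unfolding nondecr_def
  proof (intro ballI impI)
    fix a b assume "a \<in> {1..r}" "b \<in> {1..r}" "a \<le> b"
    then show "w a \<le> w b"
      by (intro lift_Suc_mono_le_ivl[where N = "{1..<r}" and f = w, OF step]) auto
  qed
  with assms show False by (simp add: nondecr_iff_inversions_empty)
qed

section \<open>Sorting multi-indices\<close>

lemma nondecr_le_iff_le_card:
  assumes "nondecr r F" "x \<in> {1..r}"
  shows "F x \<le> c \<longleftrightarrow> x \<le> card {y\<in>{1..r}. F y \<le> c}"
proof
  assume "F x \<le> c"
  have "{1..x} \<subseteq> {y\<in>{1..r}. F y \<le> c}"
  proof
    fix y assume y: "y \<in> {1..x}"
    with assms have "F y \<le> F x" unfolding nondecr_def by auto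
    with y assms(2) \<open>F x \<le> c\<close> show "y \<in> {y\<in>{1..r}. F y \<le> c}" by auto
  qed
  from card_mono[OF _ this] show "x \<le> card {y\<in>{1..r}. F y \<le> c}" by simp
next
  assume le_card: "x \<le> card {y\<in>{1..r}. F y \<le> c}"
  show "F x \<le> c"
  proof (rule ccontr)
    assume "\<not> F x \<le> c"
    have "{y\<in>{1..r}. F y \<le> c} \<subseteq> {1..<x}"
    proof
      fix y assume y: "y \<in> {y\<in>{1..r}. F y \<le> c}"
      have "\<not> x \<le> y"
      proof
        assume "x \<le> y"
        with assms y have "F x \<le> F y" unfolding nondecr_def by auto
        with y \<open>\<not> F x \<le> c\<close> show False by auto
      qed
      with y show "y \<in> {1..<x}" by auto
    qed
    from card_mono[OF _ this] have "card {y\<in>{1..r}. F y \<le> c} \<le> x - 1" by simp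
    with le_card assms(2) show False by auto
  qed
qed

lemma card_permutes_Collect_comp:
  assumes "\<rho> permutes S"
  shows "card {y\<in>S. P (\<rho> y)} = card {y\<in>S. P y}"
proof -
  have "\<rho> ` {y\<in>S. P (\<rho> y)} = {y\<in>S. P y}"
    using assms by (auto simp: permutes_in_image image_iff)
      (metis permutes_inverses(1) permutes_in_image permutes_inv)
  then show ?thesis
    by (metis card_image permutes_inj_on[OF assms])
qed

text \<open>Nondecreasing multi-indices are determined by the multiset of their values: the value at
  position x is the least c such that at least x entries are \<open>\<le> c\<close>.\<close>
lemma nondecr_comp_permutes_eq:
  assumes "nondecr r J" "nondecr r (J \<circ> \<rho>)" "\<rho> permutes {1..r}" "x \<in> {1..r}"
  shows "J (\<rho> x) = J x"
proof -
  have "J (\<rho> x) \<le> c \<longleftrightarrow> J x \<le> c" for c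
    using nondecr_le_iff_le_card[OF assms(2,4), of c] nondecr_le_iff_le_card[OF assms(1,4), of c]
      card_permutes_Collect_comp[OF assms(3), of "\<lambda>y. J y \<le> c"]
    by simp
  then show ?thesis by (meson antisym order_refl)
qed

lemma sorted_rearrangement_exists:
  assumes "g \<in> {1..r} \<rightarrow>\<^sub>E {1..m}"
  obtains J \<tau> where "J \<in> nondecr_indices r m" "\<tau> permutes {1..r}" "g = J \<circ> \<tau>"
  using assms
proof (induction "card (inversions r g)" arbitrary: g thesis rule: less_induct)
  case less
  show ?case
  proof (cases "inversions r g = {}")
    case True
    then have "g \<in> nondecr_indices r m"
      using less.prems(2) by (simp add: nondecr_indices_def nondecr_iff_inversions_empty)
    then show ?thesis by (rule less.prems(1)[of g id]) simp_all
  next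
    case False
    then obtain t where t: "1 \<le> t" "t < r" "g (Suc t) < g t"
      by (rule adjacent_descent_if_inversions)
    define g' where "g' = g \<circ> adj_swap t"
    have g: "g = g' \<circ> adj_swap t" by (simp add: g'_def)
    have "g' t < g' (Suc t)" using t(3) by (simp add: g'_def)
    from card_inversions_adj_swap[OF t(1,2) this, folded g]
    have fewer: "card (inversions r g') < card (inversions r g)" by simp
    have swap: "adj_swap t permutes {1..r}" by (rule adj_swap_permutes[OF t(1,2)])
    have "g' \<in> {1..r} \<rightarrow>\<^sub>E {1..m}"
      using less.prems(2) permutes_in_image[OF swap] permutes_not_in[OF swap]
      by (auto simp: g'_def PiE_def Pi_def extensional_def)
    then obtain J \<tau> where "J \<in> nondecr_indices r m" "\<tau> permutes {1..r}" "g' = J \<circ> \<tau>"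
      using less.hyps[OF fewer] by blast
    moreover have "g = J \<circ> (\<tau> \<circ> adj_swap t)" using g \<open>g' = J \<circ> \<tau>\<close> by (simp add: comp_assoc)
    ultimately show ?thesis by (meson less.prems(1) permutes_compose swap)
  qed
qed

lemma sorted_rearrangement_unique:
  assumes "J \<in> nondecr_indices r m" "J' \<in> nondecr_indices r m"
    and "\<tau> permutes {1..r}" "\<tau>' permutes {1..r}" "J \<circ> \<tau> = J' \<circ> \<tau>'"
  shows "J = J'"
proof
  let ?\<rho> = "\<tau> \<circ> inv \<tau>'"
  have \<rho>: "?\<rho> permutes {1..r}" by (rule permutes_compose[OF permutes_inv[OF assms(4)] assms(3)])
  have "J' = J' \<circ> \<tau>' \<circ> inv \<tau>'" by (simp add: fun_eq_iff permutes_inverses(1)[OF assms(4)])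
  also have "\<dots> = J \<circ> ?\<rho>" by (metis assms(5) comp_assoc)
  finally have J': "J' = J \<circ> ?\<rho>" .
  fix x show "J x = J' x"
  proof (cases "x \<in> {1..r}")
    case True
    have "nondecr r J" "nondecr r (J \<circ> ?\<rho>)" using assms(1,2) J' by (auto simp: nondecr_indices_def)
    from nondecr_comp_permutes_eq[OF this \<rho> True] show ?thesis by (simp add: J')
  next
    case False
    then show ?thesis using assms(1,2) by (auto simp: nondecr_indices_def PiE_def extensional_def)
  qed
qed

lemma restrict_permutes_fiber:
  assumes "\<tau> permutes S" "finite S" "\<forall>x\<in>S. J (\<tau> x) = J x"
  shows "(\<lambda>x. if x \<in> {y\<in>S. J y = a} then \<tau> x else x) permutes {y\<in>S. J y = a}"
proof (rule bij_imp_permutes)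
  let ?L = "{y\<in>S. J y = a}"
  let ?f = "\<lambda>x. if x \<in> ?L then \<tau> x else x"
  have "?f ` ?L \<subseteq> ?L" using assms permutes_in_image[OF assms(1)] by auto
  moreover have inj: "inj_on ?f ?L" using permutes_inj_on[OF assms(1)] by (auto simp: inj_on_def)
  ultimately have "?f ` ?L = ?L" using assms(2) by (intro endo_inj_surj) auto
  with inj show "bij_betw ?f ?L ?L" by (simp add: bij_betw_def)
qed auto

lemma glue_fiber_permutes:
  assumes "finite S" "P \<in> (\<Pi>\<^sub>E a\<in>J ` S. {\<pi>. \<pi> permutes {y\<in>S. J y = a}})"
  shows "(\<lambda>x. if x \<in> S then P (J x) x else x) permutes S \<and>
    (\<forall>x\<in>S. J ((\<lambda>x. if x \<in> S then P (J x) x else x) x) = J x)"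
proof -
  let ?f = "\<lambda>x. if x \<in> S then P (J x) x else x"
  have P: "P (J x) permutes {y\<in>S. J y = J x}" if "x \<in> S" for x
    using assms(2) imageI[OF that, of J] by (simp only: PiE_iff mem_Collect_eq)
  have in_fiber: "P (J x) x \<in> {y\<in>S. J y = J x}" if "x \<in> S" for x
    using permutes_in_image[OF P[OF that], of x] that by blast
  have J_preserved: "J (?f x) = J x" if "x \<in> S" for x
    using in_fiber[OF that] that by simp
  have "inj_on ?f S"
  proof (rule inj_onI)
    fix x y assume xy: "x \<in> S" "y \<in> S" "?f x = ?f y"
    have "J x = J y" using J_preserved[OF xy(1)] J_preserved[OF xy(2)] xy(3) by simp
    with xy have "P (J x) x = P (J x) y" by simp
    then show "x = y" using permutes_inj[OF P[OF xy(1)]] by (simp add: inj_eq)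
  qed
  moreover have "?f ` S \<subseteq> S"
  proof
    fix y assume "y \<in> ?f ` S"
    then obtain x where "x \<in> S" "y = ?f x" by blast
    with in_fiber[OF this(1)] show "y \<in> S" by simp
  qed
  ultimately have "?f ` S = S" using assms(1) by (intro endo_inj_surj) auto
  with \<open>inj_on ?f S\<close> have "?f permutes S"
    by (intro bij_imp_permutes) (simp_all add: bij_betw_def)
  with J_preserved show ?thesis by blast
qed

lemma bij_betw_fiberwise_permutations:
  assumes "finite S"
  shows "bij_betw (\<lambda>P x. if x \<in> S then P (J x) x else x)
           (\<Pi>\<^sub>E a\<in>J ` S. {\<pi>. \<pi> permutes {y\<in>S. J y = a}})
           {\<tau>. \<tau> permutes S \<and> (\<forall>x\<in>S. J (\<tau> x) = J x)}"
proof (rule bij_betw_imageI)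
  let ?L = "\<lambda>a. {y\<in>S. J y = a}"
  let ?P = "\<Pi>\<^sub>E a\<in>J ` S. {\<pi>. \<pi> permutes ?L a}"
  let ?glue = "\<lambda>P x. if x \<in> S then P (J x) x else x"
  show "inj_on ?glue ?P"
  proof (rule inj_onI)
    fix P1 P2 assume P: "P1 \<in> ?P" "P2 \<in> ?P" and eq: "?glue P1 = ?glue P2"
    show "P1 = P2"
    proof
      fix a show "P1 a = P2 a"
      proof (cases "a \<in> J ` S")
        case False
        then show ?thesis using P by (auto simp: PiE_def extensional_def)
      next
        case True
        then have P1: "P1 a permutes ?L a" and P2: "P2 a permutes ?L a"
          using P by (auto simp only: PiE_iff mem_Collect_eq)
        show ?thesis
        proof
          fix x show "P1 a x = P2 a x"
          proof (cases "x \<in> ?L a")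
            case True
            then have "?glue P1 x = P1 a x" "?glue P2 x = P2 a x" by auto
            with fun_cong[OF eq, of x] show ?thesis by simp
          qed (simp add: permutes_not_in[OF P1] permutes_not_in[OF P2])
        qed
      qed
    qed
  qed
  show "?glue ` ?P = {\<tau>. \<tau> permutes S \<and> (\<forall>x\<in>S. J (\<tau> x) = J x)}"
  proof (intro equalityI subsetI)
    fix \<tau> assume "\<tau> \<in> ?glue ` ?P"
    then obtain P where "P \<in> ?P" "\<tau> = ?glue P" by blast
    with glue_fiber_permutes[OF assms this(1)]
    show "\<tau> \<in> {\<tau>. \<tau> permutes S \<and> (\<forall>x\<in>S. J (\<tau> x) = J x)}" by simp
  next
    fix \<tau> assume \<tau>: "\<tau> \<in> {\<tau>. \<tau> permutes S \<and> (\<forall>x\<in>S. J (\<tau> x) = J x)}"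
    let ?P\<tau> = "\<lambda>a\<in>J ` S. (\<lambda>x. if x \<in> ?L a then \<tau> x else x)"
    have "?P\<tau> \<in> ?P" using restrict_permutes_fiber[OF _ assms] \<tau> by auto
    moreover have "?glue ?P\<tau> = \<tau>"
    proof
      fix x show "?glue ?P\<tau> x = \<tau> x"
        using \<tau> permutes_not_in[of \<tau> S x] by (cases "x \<in> S") simp_all
    qed
    ultimately show "\<tau> \<in> ?glue ` ?P"
      by (intro image_eqI[where f = ?glue and x = ?P\<tau>]) simp_all
  qed
qed

lemma card_fiber_preserving_permutations:
  assumes "finite S"
  shows "card {\<tau>. \<tau> permutes S \<and> (\<forall>x\<in>S. J (\<tau> x) = J x)} = (\<Prod>a\<in>J ` S. fact (card {x\<in>S. J x = a}))"
proof -
  have "card {\<tau>. \<tau> permutes S \<and> (\<forall>x\<in>S. J (\<tau> x) = J x)} =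
      card (\<Pi>\<^sub>E a\<in>J ` S. {\<pi>. \<pi> permutes {y\<in>S. J y = a}})"
    by (rule bij_betw_same_card[OF bij_betw_fiberwise_permutations[OF assms], symmetric])
  also have "\<dots> = (\<Prod>a\<in>J ` S. fact (card {x\<in>S. J x = a}))"
    using assms by (simp add: card_PiE card_permutations)
  finally show ?thesis .
qed

lemma card_permutes_same_comp:
  assumes "\<tau>\<^sub>0 permutes {1..r}"
  shows "card {\<tau>. \<tau> permutes {1..r} \<and> J \<circ> \<tau> = J \<circ> \<tau>\<^sub>0} = vmult r J"
proof -
  let ?S = "{1..r::nat}"
  let ?Stab = "{\<sigma>. \<sigma> permutes ?S \<and> (\<forall>x\<in>?S. J (\<sigma> x) = J x)}"
  have "bij_betw (\<lambda>\<sigma>. \<sigma> \<circ> \<tau>\<^sub>0) ?Stab {\<tau>. \<tau> permutes ?S \<and> J \<circ> \<tau> = J \<circ> \<tau>\<^sub>0}"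
  proof (rule bij_betw_byWitness[where f' = "\<lambda>\<tau>. \<tau> \<circ> inv \<tau>\<^sub>0"])
    show "\<forall>\<sigma>\<in>?Stab. \<sigma> \<circ> \<tau>\<^sub>0 \<circ> inv \<tau>\<^sub>0 = \<sigma>"
      by (simp add: comp_assoc permutes_inv_o(1)[OF assms])
    show "\<forall>\<tau>\<in>{\<tau>. \<tau> permutes ?S \<and> J \<circ> \<tau> = J \<circ> \<tau>\<^sub>0}. \<tau> \<circ> inv \<tau>\<^sub>0 \<circ> \<tau>\<^sub>0 = \<tau>"
      by (simp add: comp_assoc permutes_inv_o(2)[OF assms])
    show "(\<lambda>\<sigma>. \<sigma> \<circ> \<tau>\<^sub>0) ` ?Stab \<subseteq> {\<tau>. \<tau> permutes ?S \<and> J \<circ> \<tau> = J \<circ> \<tau>\<^sub>0}"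
    proof clarify
      fix \<sigma> assume \<sigma>: "\<sigma> permutes ?S" "\<forall>x\<in>?S. J (\<sigma> x) = J x"
      then have "J \<circ> \<sigma> = J" by (metis comp_apply ext permutes_not_in)
      with \<sigma>(1) assms show "\<sigma> \<circ> \<tau>\<^sub>0 permutes ?S \<and> J \<circ> (\<sigma> \<circ> \<tau>\<^sub>0) = J \<circ> \<tau>\<^sub>0"
        by (metis comp_assoc permutes_compose)
    qed
    show "(\<lambda>\<tau>. \<tau> \<circ> inv \<tau>\<^sub>0) ` {\<tau>. \<tau> permutes ?S \<and> J \<circ> \<tau> = J \<circ> \<tau>\<^sub>0} \<subseteq> ?Stab"
      using assms
      by (auto simp: permutes_compose permutes_inv fun_eq_iff permutes_inverses(1))
  qed
  then have "card {\<tau>. \<tau> permutes ?S \<and> J \<circ> \<tau> = J \<circ> \<tau>\<^sub>0} = card ?Stab"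
    by (simp add: bij_betw_same_card)
  also have "\<dots> = vmult r J"
    unfolding vmult_def by (rule card_fiber_preserving_permutations) simp
  finally show ?thesis .
qed

lemma sum_permutes_comp_orbit:
  fixes \<Phi> :: "(nat \<Rightarrow> nat) \<Rightarrow> 'a::complex_algebra_1"
  shows "(\<Sum>\<tau> | \<tau> permutes {1..r}. \<Phi> (J \<circ> \<tau>)) =
    (of_nat (vmult r J) :: complex) *\<^sub>C (\<Sum>g\<in>(\<lambda>\<tau>. J \<circ> \<tau>) ` {\<tau>. \<tau> permutes {1..r}}. \<Phi> g)"
proof -
  let ?P = "{\<tau>. \<tau> permutes {1..r::nat}}"
  have "(\<Sum>\<tau>\<in>?P. \<Phi> (J \<circ> \<tau>)) = (\<Sum>g\<in>(\<lambda>\<tau>. J \<circ> \<tau>) ` ?P. \<Sum>\<tau>\<in>{\<tau>\<in>?P. J \<circ> \<tau> = g}. \<Phi> (J \<circ> \<tau>))"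
    by (rule sum.image_gen) (simp add: finite_permutations)
  also have "\<dots> = (\<Sum>g\<in>(\<lambda>\<tau>. J \<circ> \<tau>) ` ?P. of_nat (vmult r J) * \<Phi> g)"
  proof (rule sum.cong[OF refl])
    fix g assume "g \<in> (\<lambda>\<tau>. J \<circ> \<tau>) ` ?P"
    then obtain \<tau>\<^sub>0 where "\<tau>\<^sub>0 permutes {1..r}" "g = J \<circ> \<tau>\<^sub>0" by blast
    then have "card {\<tau>\<in>?P. J \<circ> \<tau> = g} = vmult r J"
      using card_permutes_same_comp[of \<tau>\<^sub>0 r J] by simp
    then show "(\<Sum>\<tau>\<in>{\<tau>\<in>?P. J \<circ> \<tau> = g}. \<Phi> (J \<circ> \<tau>)) = of_nat (vmult r J) * \<Phi> g"
      by simp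
  qed
  also have "\<dots> = (of_nat (vmult r J) :: complex) *\<^sub>C (\<Sum>g\<in>(\<lambda>\<tau>. J \<circ> \<tau>) ` ?P. \<Phi> g)"
    by (simp add: of_nat_mult_eq_scaleC scaleC_sum_right)
  finally show ?thesis by simp
qed

text \<open>Every g is a rearrangement of exactly one nondecreasing multi-index, so the sum over all g
  splits into orbits; each orbit is traversed v(J) times by \<tau> \<mapsto> J \<circ> \<tau>.\<close>
lemma sum_PiE_eq_sum_nondecr_indices:
  fixes \<Phi> :: "(nat \<Rightarrow> nat) \<Rightarrow> 'a::complex_algebra_1"
  shows "(\<Sum>g\<in>{1..r} \<rightarrow>\<^sub>E {1..m}. \<Phi> g) =
    (\<Sum>J\<in>nondecr_indices r m. (1 / of_nat (vmult r J)) *\<^sub>C (\<Sum>\<tau> | \<tau> permutes {1..r}. \<Phi> (J \<circ> \<tau>)))"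
proof -
  let ?P = "{\<tau>. \<tau> permutes {1..r::nat}}"
  let ?orbit = "\<lambda>J. (\<lambda>\<tau>. J \<circ> \<tau>) ` ?P"
  have fin: "finite (nondecr_indices r m)"
    by (rule finite_subset[of _ "{1..r} \<rightarrow>\<^sub>E {1..m}"]) (auto simp: nondecr_indices_def finite_PiE)
  have orbits: "\<Union>(?orbit ` nondecr_indices r m) = {1..r} \<rightarrow>\<^sub>E {1..m}"
  proof (intro equalityI subsetI)
    fix g assume "g \<in> \<Union>(?orbit ` nondecr_indices r m)"
    then obtain J \<tau> where J: "J \<in> nondecr_indices r m" and \<tau>: "\<tau> permutes {1..r}" and g: "g = J \<circ> \<tau>"
      by blast
    from J have "J \<in> {1..r} \<rightarrow>\<^sub>E {1..m}" by (simp add: nondecr_indices_def)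
    with \<tau> show "g \<in> {1..r} \<rightarrow>\<^sub>E {1..m}"
      unfolding g using permutes_in_image[OF \<tau>] permutes_not_in[OF \<tau>]
      by (auto simp: PiE_def Pi_def extensional_def)
  next
    fix g assume "g \<in> {1..r} \<rightarrow>\<^sub>E {1..m}"
    then obtain J \<tau> where "J \<in> nondecr_indices r m" "\<tau> permutes {1..r}" "g = J \<circ> \<tau>"
      by (rule sorted_rearrangement_exists)
    then show "g \<in> \<Union>(?orbit ` nondecr_indices r m)" by blast
  qed
  have disjoint: "\<forall>J\<in>nondecr_indices r m. \<forall>J'\<in>nondecr_indices r m. J \<noteq> J' \<longrightarrow> ?orbit J \<inter> ?orbit J' = {}"
    using sorted_rearrangement_unique by fastforce
  have "(\<Sum>g\<in>{1..r} \<rightarrow>\<^sub>E {1..m}. \<Phi> g) = (\<Sum>J\<in>nondecr_indices r m. \<Sum>g\<in>?orbit J. \<Phi> g)"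
    unfolding orbits[symmetric]
    by (rule sum.UNION_disjoint[OF fin _ disjoint]) (simp add: finite_permutations)
  also have "\<dots> = (\<Sum>J\<in>nondecr_indices r m. (1 / of_nat (vmult r J)) *\<^sub>C (\<Sum>\<tau>\<in>?P. \<Phi> (J \<circ> \<tau>)))"
  proof (rule sum.cong[OF refl])
    fix J
    have "(of_nat (vmult r J) :: complex) \<noteq> 0" by (simp add: vmult_def)
    then show "(\<Sum>g\<in>?orbit J. \<Phi> g) = (1 / of_nat (vmult r J)) *\<^sub>C (\<Sum>\<tau>\<in>?P. \<Phi> (J \<circ> \<tau>))"
      unfolding sum_permutes_comp_orbit scaleC_scaleC by (simp add: scaleC_one)
  qed
  finally show ?thesis .
qed

section \<open>Row exchanges in Manin matrices\<close>

definition rper_term :: "(nat \<Rightarrow> nat \<Rightarrow> complex) \<Rightarrow> nat \<Rightarrow> (nat \<Rightarrow> nat \<Rightarrow> 'a::complex_algebra_1)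
    \<Rightarrow> (nat \<Rightarrow> nat) \<Rightarrow> (nat \<Rightarrow> nat) \<Rightarrow> (nat \<Rightarrow> nat) \<Rightarrow> 'a" where
  "rper_term p r X I J \<sigma> = mu p r J \<sigma> *\<^sub>C prod_list (map (\<lambda>t. X (I t) (J (\<sigma> t))) [1..<r+1])"

lemma rper_eq_sum_rper_term: "rper p r X I J = (\<Sum>\<sigma> | \<sigma> permutes {1..r}. rper_term p r X I J \<sigma>)"
  unfolding rper_def rper_term_def ..

lemma rper_cong_rows:
  assumes "\<forall>t\<in>{1..r}. I t = I' t"
  shows "rper p r X I J = rper p r X I' J"
proof -
  have "map (\<lambda>t. X (I t) (J (\<sigma> t))) [1..<r+1] = map (\<lambda>t. X (I' t) (J (\<sigma> t))) [1..<r+1]" for \<sigma>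
    using assms by (intro map_cong) auto
  then show ?thesis unfolding rper_def by (simp only:)
qed

lemma prod_list_upt_split_adjacent:
  assumes "1 \<le> t" "t < r" and "\<And>u. u \<noteq> t \<Longrightarrow> u \<noteq> Suc t \<Longrightarrow> f u = g u"
  shows "prod_list (map g [1..<r+1]) =
     prod_list (map f [1..<t]) * (g t * g (Suc t)) * prod_list (map f [Suc (Suc t)..<r+1])"
proof -
  have "[1..<r+1] = [1..<t] @ t # Suc t # [Suc (Suc t)..<r+1]"
    using assms(1,2) upt_add_eq_append[of 1 t "r+1-t"] by (simp add: upt_conv_Cons)
  then have "prod_list (map g [1..<r+1])
      = prod_list (map g [1..<t]) * (g t * (g (Suc t) * prod_list (map g [Suc (Suc t)..<r+1])))"
    by (simp only: map_append list.map prod_list.append prod_list.Cons)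
  moreover have "map g [1..<t] = map f [1..<t]" "map g [Suc (Suc t)..<r+1] = map f [Suc (Suc t)..<r+1]"
    using assms(3) by (auto intro!: map_cong)
  ultimately show ?thesis by (simp only: mult.assoc)
qed

lemma manin_adjacent_rows:
  fixes N :: "nat \<Rightarrow> nat \<Rightarrow> 'a::complex_algebra_1"
  assumes q: "parametric_mat m q" and p: "parametric_mat s p" and N: "manin m s q p N"
    and ab: "a \<in> {1..m}" "b \<in> {1..m}" "a < b"
    and kl: "k \<in> {1..s}" "l \<in> {1..s}" "k \<le> l"
  shows "N b k * N a l + p k l *\<^sub>C (N b l * N a k)
       = q a b *\<^sub>C (N a k * N b l + p k l *\<^sub>C (N a l * N b k))"
proof (cases "k < l")
  case True
  have "N a k * N b l - (q b a * p k l) *\<^sub>C (N b l * N a k) + p k l *\<^sub>C (N a l * N b k)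
      - q b a *\<^sub>C (N b k * N a l) = 0"
    using N ab kl True unfolding manin_def by blast
  then have "N a k * N b l + p k l *\<^sub>C (N a l * N b k)
      = q b a *\<^sub>C (N b k * N a l + p k l *\<^sub>C (N b l * N a k))"
    by (simp add: algebra_simps scaleC_add_right scaleC_scaleC)
  then have "q a b *\<^sub>C (N a k * N b l + p k l *\<^sub>C (N a l * N b k))
      = (q a b * q b a) *\<^sub>C (N b k * N a l + p k l *\<^sub>C (N b l * N a k))"
    by (simp add: scaleC_scaleC)
  also have "q a b * q b a = 1" using q ab unfolding parametric_mat_def by auto
  finally show ?thesis by (simp add: scaleC_one)
next
  case False
  with kl have "l = k" by simp
  have "N a k * N b k = q b a *\<^sub>C (N b k * N a k)"
    using N ab kl unfolding manin_def by blast
  then have "q a b *\<^sub>C (N a k * N b k) = (q a b * q b a) *\<^sub>C (N b k * N a k)"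
    by (simp add: scaleC_scaleC)
  also have "q a b * q b a = 1" using q ab unfolding parametric_mat_def by auto
  moreover have "p k k = 1" using p kl unfolding parametric_mat_def by auto
  ultimately show ?thesis using \<open>l = k\<close> by (simp add: scaleC_one scaleC_add_right)
qed

text \<open>The terms for \<sigma> and \<sigma> \<circ> (t t+1) are paired; together they form one Manin relation.\<close>
lemma rper_term_pair_adj_swap:
  fixes N :: "nat \<Rightarrow> nat \<Rightarrow> 'a::complex_algebra_1"
  assumes q: "parametric_mat m q" and p: "parametric_mat s p" and N: "manin m s q p N"
    and t: "1 \<le> t" "t < r"
    and F: "F t \<in> {1..m}" "F (Suc t) \<in> {1..m}" "F (Suc t) < F t"
    and K: "nondecr r K" "\<forall>u\<in>{1..r}. K u \<in> {1..s}"
    and \<sigma>: "\<sigma> permutes {1..r}" "\<sigma> t < \<sigma> (Suc t)"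
  shows "rper_term p r N F K \<sigma> + rper_term p r N F K (\<sigma> \<circ> adj_swap t) =
     q (F (Suc t)) (F t) *\<^sub>C (rper_term p r N (F \<circ> adj_swap t) K \<sigma> +
        rper_term p r N (F \<circ> adj_swap t) K (\<sigma> \<circ> adj_swap t))"
proof -
  define a b k l where "a = F (Suc t)" and "b = F t" and "k = K (\<sigma> t)" and "l = K (\<sigma> (Suc t))"
  define f where "f = (\<lambda>u. N (F u) (K (\<sigma> u)))"
  define Pre Post where "Pre = prod_list (map f [1..<t])" and "Post = prod_list (map f [Suc (Suc t)..<r+1])"
  have \<sigma>_t: "\<sigma> t \<in> {1..r}" "\<sigma> (Suc t) \<in> {1..r}" using t permutes_in_image[OF \<sigma>(1)] by auto
  have kl: "k \<le> l" using K(1) \<sigma>_t \<sigma>(2) unfolding nondecr_def k_def l_def by auto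
  have ks: "k \<in> {1..s}" "l \<in> {1..s}" using K(2) \<sigma>_t unfolding k_def l_def by auto
  have mu_swap: "mu p r K (\<sigma> \<circ> adj_swap t) = p k l * mu p r K \<sigma>"
    using mu_adj_swap[OF t \<sigma>(2)] unfolding k_def l_def .
  have factor: "rper_term p r N G K \<tau>
      = mu p r K \<tau> *\<^sub>C (Pre * (N (G t) (K (\<tau> t)) * N (G (Suc t)) (K (\<tau> (Suc t)))) * Post)"
    if "\<And>u. u \<noteq> t \<Longrightarrow> u \<noteq> Suc t \<Longrightarrow> G u = F u \<and> \<tau> u = \<sigma> u" for G \<tau>
    unfolding rper_term_def Pre_def Post_def
    by (subst prod_list_upt_split_adjacent[OF t, of f]) (simp_all add: f_def that)
  have combine: "\<mu> *\<^sub>C (A * X * B) + (d * \<mu>) *\<^sub>C (A * Y * B) = \<mu> *\<^sub>C (A * (X + d *\<^sub>C Y) * B)"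
    for \<mu> d and A X Y B :: 'a
    by (simp add: distrib_left distrib_right mult_scaleC_left mult_scaleC_right scaleC_add_right
        scaleC_scaleC mult.commute)
  have pull: "c *\<^sub>C (\<mu> *\<^sub>C (A * V * B)) = \<mu> *\<^sub>C (A * (c *\<^sub>C V) * B)" for c \<mu> and A V B :: 'a
    by (simp add: mult_scaleC_left mult_scaleC_right scaleC_scaleC mult.commute)
  have rows: "N b k * N a l + p k l *\<^sub>C (N b l * N a k)
      = q a b *\<^sub>C (N a k * N b l + p k l *\<^sub>C (N a l * N b k))"
    using F by (intro manin_adjacent_rows[OF q p N _ _ _ ks kl]) (auto simp: a_def b_def)
  have "rper_term p r N F K \<sigma> + rper_term p r N F K (\<sigma> \<circ> adj_swap t)
      = mu p r K \<sigma> *\<^sub>C (Pre * (N b k * N a l + p k l *\<^sub>C (N b l * N a k)) * Post)"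
    by (simp add: factor mu_swap combine a_def b_def k_def l_def)
  also have "\<dots> = q a b *\<^sub>C (mu p r K \<sigma> *\<^sub>C (Pre * (N a k * N b l + p k l *\<^sub>C (N a l * N b k)) * Post))"
    unfolding rows pull ..
  also have "\<dots> = q a b *\<^sub>C (rper_term p r N (F \<circ> adj_swap t) K \<sigma> +
        rper_term p r N (F \<circ> adj_swap t) K (\<sigma> \<circ> adj_swap t))"
    by (simp add: factor mu_swap combine a_def b_def k_def l_def)
  finally show ?thesis unfolding a_def b_def .
qed

lemma rper_adj_swap_rows:
  fixes N :: "nat \<Rightarrow> nat \<Rightarrow> 'a::complex_algebra_1"
  assumes q: "parametric_mat m q" and p: "parametric_mat s p" and N: "manin m s q p N"
    and t: "1 \<le> t" "t < r"
    and F: "F t \<in> {1..m}" "F (Suc t) \<in> {1..m}" "F (Suc t) < F t"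
    and K: "nondecr r K" "\<forall>u\<in>{1..r}. K u \<in> {1..s}"
  shows "rper p r N F K = q (F (Suc t)) (F t) *\<^sub>C rper p r N (F \<circ> adj_swap t) K"
proof -
  let ?P = "{\<sigma>. \<sigma> permutes {1..r}}"
  let ?c = "q (F (Suc t)) (F t)"
  let ?T = "rper_term p r N F K" and ?T' = "rper_term p r N (F \<circ> adj_swap t) K"
  have swap: "adj_swap t permutes {1..r}" by (rule adj_swap_permutes[OF t])
  have pair: "?T \<sigma> + ?T (\<sigma> \<circ> adj_swap t) = ?c *\<^sub>C (?T' \<sigma> + ?T' (\<sigma> \<circ> adj_swap t))"
    if \<sigma>: "\<sigma> \<in> ?P" for \<sigma>
  proof (cases "\<sigma> t < \<sigma> (Suc t)")
    case True
    with \<sigma> show ?thesis by (intro rper_term_pair_adj_swap[OF q p N t F K]) simp_all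
  next
    case False
    have "\<sigma> t \<noteq> \<sigma> (Suc t)" using \<sigma> permutes_inj[of \<sigma> "{1..r}"] by (auto dest: injD)
    with False have "(\<sigma> \<circ> adj_swap t) t < (\<sigma> \<circ> adj_swap t) (Suc t)" by simp
    moreover have "\<sigma> \<circ> adj_swap t permutes {1..r}" using \<sigma> permutes_compose[OF swap] by simp
    ultimately show ?thesis
      using rper_term_pair_adj_swap[OF q p N t F K, of "\<sigma> \<circ> adj_swap t"] by (simp add: add.commute)
  qed
  have "rper p r N F K + rper p r N F K = (\<Sum>\<sigma>\<in>?P. ?T \<sigma> + ?T (\<sigma> \<circ> adj_swap t))"
    unfolding rper_eq_sum_rper_term sum.distrib sum_permutations_compose_right[OF swap, of ?T, symmetric] ..
  also have "\<dots> = (\<Sum>\<sigma>\<in>?P. ?c *\<^sub>C (?T' \<sigma> + ?T' (\<sigma> \<circ> adj_swap t)))"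
    by (rule sum.cong[OF refl pair])
  also have "\<dots> = ?c *\<^sub>C (rper p r N (F \<circ> adj_swap t) K + rper p r N (F \<circ> adj_swap t) K)"
    unfolding rper_eq_sum_rper_term scaleC_sum_right[symmetric] sum.distrib
      sum_permutations_compose_right[OF swap, of ?T', symmetric] ..
  finally show ?thesis by (rule scaleC_add_self_cancel)
qed

lemma rper_rows_adj_swap_nondecr:
  fixes N :: "nat \<Rightarrow> nat \<Rightarrow> 'a::complex_algebra_1"
  assumes q: "parametric_mat m q" and p: "parametric_mat s p" and N: "manin m s q p N"
    and J: "nondecr r J" "\<forall>u\<in>{1..r}. J u \<in> {1..m}"
    and K: "nondecr r K" "\<forall>u\<in>{1..r}. K u \<in> {1..s}"
    and t: "1 \<le> t" "t < r" and \<tau>: "\<tau> permutes {1..r}" "\<tau> t < \<tau> (Suc t)"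
  shows "rper p r N (J \<circ> \<tau> \<circ> adj_swap t) K = q (J (\<tau> t)) (J (\<tau> (Suc t))) *\<^sub>C rper p r N (J \<circ> \<tau>) K"
proof -
  have \<tau>_t: "\<tau> t \<in> {1..r}" "\<tau> (Suc t) \<in> {1..r}" using t permutes_in_image[OF \<tau>(1)] by auto
  then have le: "J (\<tau> t) \<le> J (\<tau> (Suc t))" using J(1) \<tau>(2) unfolding nondecr_def by simp
  have in_m: "J (\<tau> t) \<in> {1..m}" "J (\<tau> (Suc t)) \<in> {1..m}" using J(2) \<tau>_t by auto
  show ?thesis
  proof (cases "J (\<tau> t) = J (\<tau> (Suc t))")
    case True
    then have "q (J (\<tau> t)) (J (\<tau> (Suc t))) = 1" using q in_m unfolding parametric_mat_def by simp
    moreover have "\<forall>u\<in>{1..r}. (J \<circ> \<tau> \<circ> adj_swap t) u = (J \<circ> \<tau>) u"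
      using True by (auto simp: transpose_def)
    ultimately show ?thesis using rper_cong_rows by (metis scaleC_one)
  next
    case False
    let ?F = "J \<circ> \<tau> \<circ> adj_swap t"
    have "?F t \<in> {1..m}" "?F (Suc t) \<in> {1..m}" "?F (Suc t) < ?F t"
      using in_m le False by auto
    moreover have "q (?F (Suc t)) (?F t) = q (J (\<tau> t)) (J (\<tau> (Suc t)))" by simp
    ultimately show ?thesis
      using rper_adj_swap_rows[OF q p N t _ _ _ K, of ?F] unfolding comp_adj_swap_adj_swap by simp
  qed
qed

text \<open>Permuting a sorted row index of N produces the same factor \<mu> as in the permanent of M.\<close>
lemma rper_rows_permute:
  fixes N :: "nat \<Rightarrow> nat \<Rightarrow> 'a::complex_algebra_1"
  assumes q: "parametric_mat m q" and p: "parametric_mat s p" and N: "manin m s q p N"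
    and J: "nondecr r J" "\<forall>u\<in>{1..r}. J u \<in> {1..m}"
    and K: "nondecr r K" "\<forall>u\<in>{1..r}. K u \<in> {1..s}"
    and \<tau>: "\<tau> permutes {1..r}"
  shows "rper p r N (J \<circ> \<tau>) K = mu q r J \<tau> *\<^sub>C rper p r N J K"
  using \<tau>
proof (induction "card (inversions r \<tau>)" arbitrary: \<tau> rule: less_induct)
  case less
  show ?case
  proof (cases "inversions r \<tau> = {}")
    case True
    then have "nondecr r (J \<circ> \<tau>)"
      using J(1) permutes_in_image[OF less.prems] unfolding nondecr_iff_inversions_empty[symmetric]
      by (auto simp: nondecr_def)
    then have "\<forall>u\<in>{1..r}. (J \<circ> \<tau>) u = J u"
      using nondecr_comp_permutes_eq[OF J(1) _ less.prems] by simp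
    moreover have "mu q r J \<tau> = 1" unfolding mu_eq_prod_inversions True by simp
    ultimately show ?thesis using rper_cong_rows by (metis scaleC_one)
  next
    case False
    then obtain t where t: "1 \<le> t" "t < r" "\<tau> (Suc t) < \<tau> t"
      by (rule adjacent_descent_if_inversions)
    define \<tau>' where "\<tau>' = \<tau> \<circ> adj_swap t"
    have \<tau>: "\<tau> = \<tau>' \<circ> adj_swap t" by (simp add: \<tau>'_def)
    have ascent: "\<tau>' t < \<tau>' (Suc t)" using t(3) by (simp add: \<tau>'_def)
    from card_inversions_adj_swap[OF t(1,2) ascent, folded \<tau>]
    have fewer: "card (inversions r \<tau>') < card (inversions r \<tau>)" by simp
    have \<tau>': "\<tau>' permutes {1..r}"
      unfolding \<tau>'_def by (rule permutes_compose[OF adj_swap_permutes[OF t(1,2)] less.prems])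
    have "rper p r N (J \<circ> \<tau>) K = q (J (\<tau>' t)) (J (\<tau>' (Suc t))) *\<^sub>C rper p r N (J \<circ> \<tau>') K"
      using rper_rows_adj_swap_nondecr[OF q p N J K t(1,2) \<tau>' ascent] by (simp add: \<tau> comp_assoc)
    also have "\<dots> = (q (J (\<tau>' t)) (J (\<tau>' (Suc t))) * mu q r J \<tau>') *\<^sub>C rper p r N J K"
      by (simp add: less.hyps[OF fewer \<tau>'] scaleC_scaleC)
    also have "q (J (\<tau>' t)) (J (\<tau>' (Suc t))) * mu q r J \<tau>' = mu q r J \<tau>"
      using mu_adj_swap[OF t(1,2) ascent, of q J] by (simp add: \<tau>)
    finally show ?thesis .
  qed
qed

section \<open>The permanent of a product\<close>

lemma prod_list_map_commute:
  fixes b :: "'a::monoid_mult"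
  assumes "\<forall>y\<in>set xs. b * a y = a y * b"
  shows "b * prod_list (map a xs) = prod_list (map a xs) * b"
  using assms
proof (induction xs)
  case (Cons x xs)
  have "b * prod_list (map a (x # xs)) = a x * (b * prod_list (map a xs))"
    using Cons.prems by (simp add: mult.assoc[symmetric])
  also have "\<dots> = prod_list (map a (x # xs)) * b" using Cons by (simp add: mult.assoc)
  finally show ?case .
qed simp

lemma prod_list_map_mult_commuting:
  fixes a b :: "'b \<Rightarrow> 'a::monoid_mult"
  assumes "\<forall>x\<in>set xs. \<forall>y\<in>set xs. b x * a y = a y * b x"
  shows "prod_list (map (\<lambda>t. a t * b t) xs) = prod_list (map a xs) * prod_list (map b xs)"
  using assms
proof (induction xs)
  case (Cons x xs)
  have comm: "b x * prod_list (map a xs) = prod_list (map a xs) * b x"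
    using Cons.prems by (intro prod_list_map_commute) simp
  have "prod_list (map (\<lambda>t. a t * b t) (x # xs))
      = a x * (b x * prod_list (map a xs)) * prod_list (map b xs)"
    using Cons by (simp add: mult.assoc)
  also have "\<dots> = prod_list (map a (x # xs)) * prod_list (map b (x # xs))"
    unfolding comm by (simp add: mult.assoc)
  finally show ?case .
qed simp

lemma prod_list_map_sum:
  fixes f :: "'b \<Rightarrow> 'c \<Rightarrow> 'a::semiring_1"
  assumes "distinct xs" "finite A"
  shows "prod_list (map (\<lambda>t. \<Sum>j\<in>A. f t j) xs) = (\<Sum>g\<in>set xs \<rightarrow>\<^sub>E A. prod_list (map (\<lambda>t. f t (g t)) xs))"
  using assms(1)
proof (induction xs)
  case (Cons x xs)
  then have x: "x \<notin> set xs" by simp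
  have "prod_list (map (\<lambda>t. \<Sum>j\<in>A. f t j) (x # xs)) =
        (\<Sum>(j, g)\<in>A \<times> (set xs \<rightarrow>\<^sub>E A). f x j * prod_list (map (\<lambda>t. f t (g t)) xs))"
    using Cons by (simp add: sum_product sum.cartesian_product)
  also have "\<dots> = (\<Sum>(j, g)\<in>A \<times> (set xs \<rightarrow>\<^sub>E A). prod_list (map (\<lambda>t. f t ((g(x := j)) t)) (x # xs)))"
  proof (rule sum.cong[OF refl], clarify)
    fix j g
    have rest: "map (\<lambda>t. f t ((g(x := j)) t)) xs = map (\<lambda>t. f t (g t)) xs"
      using x by (intro map_cong) auto
    show "f x j * prod_list (map (\<lambda>t. f t (g t)) xs) = prod_list (map (\<lambda>t. f t ((g(x := j)) t)) (x # xs))"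
      by (simp only: list.map prod_list.Cons fun_upd_same rest)
  qed
  also have "\<dots> = (\<Sum>h\<in>(\<lambda>(y, g). g(x := y)) ` (A \<times> (set xs \<rightarrow>\<^sub>E A)).
      prod_list (map (\<lambda>t. f t (h t)) (x # xs)))"
    by (subst sum.reindex[OF inj_combinator[OF x]]) (simp add: case_prod_unfold)
  also have "(\<lambda>(y, g). g(x := y)) ` (A \<times> (set xs \<rightarrow>\<^sub>E A)) = set (x # xs) \<rightarrow>\<^sub>E A"
    by (simp add: PiE_insert_eq)
  finally show ?case .
qed simp

definition prod_entries :: "(nat \<Rightarrow> nat \<Rightarrow> 'a::complex_algebra_1) \<Rightarrow> (nat \<Rightarrow> nat) \<Rightarrow> nat \<Rightarrow> (nat \<Rightarrow> nat) \<Rightarrow> 'a" where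
  "prod_entries M I r g = prod_list (map (\<lambda>t. M (I t) (g t)) [1..<r+1])"

lemma prod_list_matmul:
  fixes M N :: "nat \<Rightarrow> nat \<Rightarrow> 'a::complex_algebra_1"
  assumes comm: "\<forall>i\<in>{1..m}. \<forall>j\<in>{1..s}. \<forall>k\<in>{1..n}. \<forall>l\<in>{1..m}. N i j * M k l = M k l * N i j"
    and I: "\<forall>t\<in>{1..r}. I t \<in> {1..n}" and L: "\<forall>t\<in>{1..r}. L t \<in> {1..s}"
  shows "prod_list (map (\<lambda>t. matmul m M N (I t) (L t)) [1..<r+1]) =
     (\<Sum>g\<in>{1..r} \<rightarrow>\<^sub>E {1..m}. prod_entries M I r g * prod_list (map (\<lambda>t. N (g t) (L t)) [1..<r+1]))"
proof -
  have upt: "set [1..<r+1] = {1..r}" by auto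
  have "prod_list (map (\<lambda>t. matmul m M N (I t) (L t)) [1..<r+1]) =
      (\<Sum>g\<in>{1..r} \<rightarrow>\<^sub>E {1..m}. prod_list (map (\<lambda>t. M (I t) (g t) * N (g t) (L t)) [1..<r+1]))"
    unfolding matmul_def prod_list_map_sum[OF distinct_upt finite_atLeastAtMost] upt ..
  also have "\<dots> = (\<Sum>g\<in>{1..r} \<rightarrow>\<^sub>E {1..m}. prod_entries M I r g * prod_list (map (\<lambda>t. N (g t) (L t)) [1..<r+1]))"
  proof (rule sum.cong[OF refl])
    fix g assume "g \<in> {1..r} \<rightarrow>\<^sub>E {1..m}"
    then have "\<forall>x\<in>set [1..<r+1]. \<forall>y\<in>set [1..<r+1].
        N (g x) (L x) * M (I y) (g y) = M (I y) (g y) * N (g x) (L x)"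
      using comm I L unfolding upt by (simp add: PiE_iff)
    then show "prod_list (map (\<lambda>t. M (I t) (g t) * N (g t) (L t)) [1..<r+1]) =
        prod_entries M I r g * prod_list (map (\<lambda>t. N (g t) (L t)) [1..<r+1])"
      unfolding prod_entries_def by (rule prod_list_map_mult_commuting)
  qed
  finally show ?thesis .
qed

lemma rper_matmul_eq_sum:
  fixes M N :: "nat \<Rightarrow> nat \<Rightarrow> 'a::complex_algebra_1"
  assumes comm: "\<forall>i\<in>{1..m}. \<forall>j\<in>{1..s}. \<forall>k\<in>{1..n}. \<forall>l\<in>{1..m}. N i j * M k l = M k l * N i j"
    and I: "\<forall>t\<in>{1..r}. I t \<in> {1..n}" and K: "\<forall>t\<in>{1..r}. K t \<in> {1..s}"
  shows "rper p r (matmul m M N) I K = (\<Sum>g\<in>{1..r} \<rightarrow>\<^sub>E {1..m}. prod_entries M I r g * rper p r N g K)"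
proof -
  let ?P = "{\<sigma>. \<sigma> permutes {1..r}}" and ?G = "{1..r} \<rightarrow>\<^sub>E {1..m}"
  let ?N = "\<lambda>g \<sigma>. prod_list (map (\<lambda>t. N (g t) (K (\<sigma> t))) [1..<r+1])"
  have K\<sigma>: "\<forall>t\<in>{1..r}. K (\<sigma> t) \<in> {1..s}" if "\<sigma> \<in> ?P" for \<sigma>
    using K that permutes_in_image[of \<sigma> "{1..r}"] by auto
  have "rper p r (matmul m M N) I K = (\<Sum>\<sigma>\<in>?P. mu p r K \<sigma> *\<^sub>C (\<Sum>g\<in>?G. prod_entries M I r g * ?N g \<sigma>))"
    unfolding rper_def
    by (intro sum.cong refl arg_cong[where f = "scaleC _"] prod_list_matmul[OF comm I K\<sigma>]) simp
  also have "\<dots> = (\<Sum>\<sigma>\<in>?P. \<Sum>g\<in>?G. prod_entries M I r g * (mu p r K \<sigma> *\<^sub>C ?N g \<sigma>))"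
    by (simp only: scaleC_sum_right mult_scaleC_right)
  also have "\<dots> = (\<Sum>g\<in>?G. \<Sum>\<sigma>\<in>?P. prod_entries M I r g * (mu p r K \<sigma> *\<^sub>C ?N g \<sigma>))"
    by (rule sum.swap)
  also have "\<dots> = (\<Sum>g\<in>?G. prod_entries M I r g * rper p r N g K)"
    unfolding rper_def by (simp add: sum_distrib_left)
  finally show ?thesis .
qed

lemma rper_mult_rper_eq_sum:
  fixes M N :: "nat \<Rightarrow> nat \<Rightarrow> 'a::complex_algebra_1"
  assumes q: "parametric_mat m q" and p: "parametric_mat s p" and N: "manin m s q p N"
    and J: "J \<in> nondecr_indices r m"
    and K: "nondecr r K" "\<forall>u\<in>{1..r}. K u \<in> {1..s}"
  shows "rper q r M I J * rper p r N J K =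
         (\<Sum>\<tau> | \<tau> permutes {1..r}. prod_entries M I r (J \<circ> \<tau>) * rper p r N (J \<circ> \<tau>) K)"
proof -
  have J': "nondecr r J" "\<forall>u\<in>{1..r}. J u \<in> {1..m}" using J by (auto simp: nondecr_indices_def)
  have "rper q r M I J * rper p r N J K =
      (\<Sum>\<tau> | \<tau> permutes {1..r}. prod_entries M I r (J \<circ> \<tau>) * (mu q r J \<tau> *\<^sub>C rper p r N J K))"
    unfolding rper_def prod_entries_def
    by (simp add: sum_distrib_right mult_scaleC_left mult_scaleC_right)
  also have "\<dots> = (\<Sum>\<tau> | \<tau> permutes {1..r}. prod_entries M I r (J \<circ> \<tau>) * rper p r N (J \<circ> \<tau>) K)"
    using rper_rows_permute[OF q p N J' K] by simp
  finally show ?thesis .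
qed

lemma rper_hat_matmul:
  fixes M N :: "nat \<Rightarrow> nat \<Rightarrow> 'a::complex_algebra_1"
  assumes q: "parametric_mat m q" and p: "parametric_mat s p" and N: "manin m s q p N"
    and comm: "\<forall>i\<in>{1..m}. \<forall>j\<in>{1..s}. \<forall>k\<in>{1..n}. \<forall>l\<in>{1..m}. N i j * M k l = M k l * N i j"
    and I: "\<forall>t\<in>{1..r}. I t \<in> {1..n}"
    and K: "\<forall>t\<in>{1..r}. K t \<in> {1..s}" "nondecr r K"
  shows "rper_hat p r (matmul m M N) I K =
           (\<Sum>J\<in>nondecr_indices r m. rper_hat q r M I J * rper_hat p r N J K)"
proof -
  let ?c = "\<lambda>J. 1 / of_nat (vmult r J) :: complex"
  have expand: "rper p r (matmul m M N) I K =
      (\<Sum>J\<in>nondecr_indices r m. ?c J *\<^sub>C (rper q r M I J * rper p r N J K))"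
    unfolding rper_matmul_eq_sum[OF comm I K(1)] sum_PiE_eq_sum_nondecr_indices
    using rper_mult_rper_eq_sum[OF q p N _ K(2,1)] by simp
  have "rper_hat p r (matmul m M N) I K =
      (\<Sum>J\<in>nondecr_indices r m. (?c J * ?c K) *\<^sub>C (rper q r M I J * rper p r N J K))"
    unfolding rper_hat_def expand scaleC_sum_right scaleC_scaleC by (simp only: mult.commute[of "?c K"])
  then show ?thesis
    unfolding rper_hat_def scaleC_mult_scaleC .
qed

theorem mainTheorem12:
  fixes q p :: "nat \<Rightarrow> nat \<Rightarrow> complex"
    and M N :: "nat \<Rightarrow> nat \<Rightarrow> 'a::complex_algebra_1"
    and n m s r :: nat and I K :: "nat \<Rightarrow> nat"
  assumes "parametric_mat m q" and "parametric_mat s p"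
    and "manin m s q p N"
    and "\<forall>i\<in>{1..m}. \<forall>j\<in>{1..s}. \<forall>k\<in>{1..n}. \<forall>l\<in>{1..m}. N i j * M k l = M k l * N i j"
    and "\<forall>t\<in>{1..r}. I t \<in> {1..n}"
    and "\<forall>t\<in>{1..r}. K t \<in> {1..s}" and "nondecr r K"
  shows "(rper_hat p r (matmul m M N) I K =
           (\<Sum>J\<in>nondecr_indices r m. rper_hat q r M I J * rper_hat p r N J K)) \<and>
         (m = n \<and> s = n \<longrightarrow>
           rper_hat p n (matmul m M N) id id =
           (\<Sum>J\<in>nondecr_indices n m. rper_hat q n M id J * rper_hat p n N J id))"
proof (intro conjI impI)
  show "rper_hat p r (matmul m M N) I K =
      (\<Sum>J\<in>nondecr_indices r m. rper_hat q r M I J * rper_hat p r N J K)"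
    by (rule rper_hat_matmul[OF assms])
  assume "m = n \<and> s = n"
  moreover have "nondecr n id" by (simp add: nondecr_def)
  ultimately show "rper_hat p n (matmul m M N) id id =
      (\<Sum>J\<in>nondecr_indices n m. rper_hat q n M id J * rper_hat p n N J id)"
    using rper_hat_matmul[OF assms(1-4), of n id id] by simp
qed

end
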